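(* Let $(A,\circ,-)$ be a minus-algebra, let $a,b\in A$ with $a\not\le b$, and let $F$ be a maximally $(a,b)$-separating filter of $(A,\circ)$. Then $F$ is prime: whenever $x\in F$ and $y\in A$, either $y\in F$ or $x-y\in F$.
   Context: A minus-algebra $(A,\circ,-)$ satisfies: $x\circ y=y-(y-x)$; $(A,\circ)$ is a right normal band (semigroup with $x\circ x=x$, $(x\circ y)\circ z=(y\circ x)\circ z$); there is an element $0$ with $x-x=0$ for all $x$; $x\circ0=0\circ x=0$; $(x-y)\circ x=x-y$; $(x-y)\circ y=0$; $(x-y)\circ z=(x\circ z)-y$; and $s-x=t-x\ \&\ x\circ s=x\circ t\Rightarrow s=t$. On $(A,\circ)$: $f\lesssim g$ iff $g\circ f=f$; $f\le g$ iff $f=f\circ g$. A filter is a non-empty $F\subseteq A$ closed under $\circ$ with $a\in F$, $a\lesssim b\Rightarrow b\in F$. For $a\not\le b$, a filter $F$ is $(a,b)$-separating if $a\in F$ and there is no $e\in F$ with $e\circ a=e\circ b$; it is maximally $(a,b)$-separating if it is maximal under inclusion among $(a,b)$-separating filters. *)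

theory Defs
  imports Main
begin

text \<open>A minus-algebra on the whole type 'a, with composition c (x o y = c x y),
 minus m (x - y = m x y) and distinguished element z (the 0).\<close>
definition minus_algebra :: "('a \<Rightarrow> 'a \<Rightarrow> 'a) \<Rightarrow> ('a \<Rightarrow> 'a \<Rightarrow> 'a) \<Rightarrow> 'a \<Rightarrow> bool" where
  "minus_algebra c m z \<longleftrightarrow>
     (\<forall>x y. c x y = m y (m y x)) \<and>
     (\<forall>x y w. c (c x y) w = c x (c y w)) \<and>
     (\<forall>x. c x x = x) \<and>
     (\<forall>x y w. c (c x y) w = c (c y x) w) \<and>
     (\<forall>x. m x x = z) \<and>
     (\<forall>x. c x z = z \<and> c z x = z) \<and>
     (\<forall>x y. c (m x y) x = m x y) \<and>
     (\<forall>x y. c (m x y) y = z) \<and>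
     (\<forall>x y w. c (m x y) w = m (c x w) y) \<and>
     (\<forall>s t x. m s x = m t x \<and> c x s = c x t \<longrightarrow> s = t)"

definition preleq :: "('a \<Rightarrow> 'a \<Rightarrow> 'a) \<Rightarrow> 'a \<Rightarrow> 'a \<Rightarrow> bool" where
  "preleq c f g \<longleftrightarrow> c g f = f"

definition leqc :: "('a \<Rightarrow> 'a \<Rightarrow> 'a) \<Rightarrow> 'a \<Rightarrow> 'a \<Rightarrow> bool" where
  "leqc c f g \<longleftrightarrow> f = c f g"

definition is_filter :: "('a \<Rightarrow> 'a \<Rightarrow> 'a) \<Rightarrow> 'a set \<Rightarrow> bool" where
  "is_filter c F \<longleftrightarrow> F \<noteq> {} \<and> (\<forall>x\<in>F. \<forall>y\<in>F. c x y \<in> F) \<and>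
     (\<forall>x y. x \<in> F \<and> preleq c x y \<longrightarrow> y \<in> F)"

definition separating :: "('a \<Rightarrow> 'a \<Rightarrow> 'a) \<Rightarrow> 'a \<Rightarrow> 'a \<Rightarrow> 'a set \<Rightarrow> bool" where
  "separating c a b F \<longleftrightarrow> is_filter c F \<and> a \<in> F \<and> \<not> (\<exists>e\<in>F. c e a = c e b)"

definition max_separating :: "('a \<Rightarrow> 'a \<Rightarrow> 'a) \<Rightarrow> 'a \<Rightarrow> 'a \<Rightarrow> 'a set \<Rightarrow> bool" where
  "max_separating c a b F \<longleftrightarrow> separating c a b F \<and>
     (\<forall>G. separating c a b G \<and> F \<subseteq> G \<longrightarrow> G = F)"

end

theory Submission
  imports Defs
begin

text \<open>If \<open>y \<notin> F\<close> and \<open>x - y \<notin> F\<close>, maximality lets us adjoin each of them to \<open>F\<close>; the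
  resulting filters are no longer separating, so some \<open>f\<^sub>1 \<circ> y\<close> and \<open>f\<^sub>2 \<circ> (x - y)\<close> with
  \<open>f\<^sub>i \<in> F\<close> identify \<open>a\<close> and \<open>b\<close>. For \<open>f = f\<^sub>1 \<circ> f\<^sub>2\<close> the elements \<open>s = f \<circ> x \<circ> a\<close> and
  \<open>t = f \<circ> x \<circ> b\<close> then satisfy \<open>y \<circ> s = y \<circ> t\<close> and \<open>s - y = t - y\<close>, so the cancellation
  axiom gives \<open>s = t\<close>, contradicting that \<open>f \<circ> x \<in> F\<close> separates \<open>a\<close> from \<open>b\<close>.\<close>

definition filter_adjoin :: "('a \<Rightarrow> 'a \<Rightarrow> 'a) \<Rightarrow> 'a set \<Rightarrow> 'a \<Rightarrow> 'a set" where
  "filter_adjoin c F u = {w. \<exists>f\<in>F. preleq c (c f u) w}"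

locale right_normal_band =
  fixes c :: "'a \<Rightarrow> 'a \<Rightarrow> 'a"
  assumes assoc: "c (c x y) w = c x (c y w)"
    and idem: "c x x = x"
    and right_normal: "c (c x y) w = c (c y x) w"
begin

lemma left_commute: "c x (c y w) = c y (c x w)"
  by (metis assoc right_normal)

lemma equalizer_left_mult: "c e a = c e b \<Longrightarrow> c (c g e) a = c (c g e) b"
  by (simp add: assoc)

lemma equalizer_preleq:
  assumes "preleq c g e" and "c e a = c e b"
  shows "c g a = c g b"
proof -
  have "c g w = c g (c e w)" for w
  proof -
    have "c g w = c (c e g) w"
      using assms(1) unfolding preleq_def by simp
    also have "\<dots> = c g (c e w)"
      by (simp only: right_normal assoc left_commute[of e g])
    finally show ?thesis .
  qed
  then show ?thesis
    using assms(2) by metis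
qed

lemma preleq_comp_self: "preleq c (c f u) u"
  unfolding preleq_def by (simp only: left_commute[of u f] idem)

lemma filter_adjoin_is_filter:
  assumes "is_filter c F"
  shows "is_filter c (filter_adjoin c F u)"
  unfolding is_filter_def
proof (intro conjI allI ballI impI)
  obtain f where "f \<in> F"
    using assms unfolding is_filter_def by blast
  then show "filter_adjoin c F u \<noteq> {}"
    unfolding filter_adjoin_def using preleq_comp_self by blast
next
  fix w\<^sub>1 w\<^sub>2 assume "w\<^sub>1 \<in> filter_adjoin c F u" "w\<^sub>2 \<in> filter_adjoin c F u"
  then obtain f\<^sub>1 f\<^sub>2 where f\<^sub>1: "f\<^sub>1 \<in> F" "c w\<^sub>1 (c f\<^sub>1 u) = c f\<^sub>1 u"
    and f\<^sub>2: "f\<^sub>2 \<in> F" "c w\<^sub>2 (c f\<^sub>2 u) = c f\<^sub>2 u"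
    unfolding filter_adjoin_def preleq_def by blast
  have "c w\<^sub>2 (c (c f\<^sub>1 f\<^sub>2) u) = c (c f\<^sub>1 f\<^sub>2) u"
    using f\<^sub>2(2) by (simp only: assoc left_commute[of w\<^sub>2 f\<^sub>1])
  moreover have "c w\<^sub>1 (c (c f\<^sub>1 f\<^sub>2) u) = c (c f\<^sub>1 f\<^sub>2) u"
    by (simp only: assoc left_commute[of f\<^sub>1 f\<^sub>2] left_commute[of w\<^sub>1 f\<^sub>2] f\<^sub>1(2))
  ultimately have "preleq c (c (c f\<^sub>1 f\<^sub>2) u) (c w\<^sub>1 w\<^sub>2)"
    unfolding preleq_def by (simp only: assoc)
  moreover have "c f\<^sub>1 f\<^sub>2 \<in> F"
    using assms f\<^sub>1 f\<^sub>2 unfolding is_filter_def by blast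
  ultimately show "c w\<^sub>1 w\<^sub>2 \<in> filter_adjoin c F u"
    unfolding filter_adjoin_def by blast
next
  fix x y assume "x \<in> filter_adjoin c F u \<and> preleq c x y"
  then obtain f where "f \<in> F" "c x (c f u) = c f u" "c y x = x"
    unfolding filter_adjoin_def preleq_def by blast
  then have "c y (c f u) = c f u"
    by (metis assoc)
  with \<open>f \<in> F\<close> show "y \<in> filter_adjoin c F u"
    unfolding filter_adjoin_def preleq_def by blast
qed

lemma subset_filter_adjoin: "F \<subseteq> filter_adjoin c F u"
proof
  fix f assume "f \<in> F"
  moreover have "preleq c (c f u) f"
    unfolding preleq_def by (simp flip: assoc add: idem)
  ultimately show "f \<in> filter_adjoin c F u"
    unfolding filter_adjoin_def by blast
qed

lemma mem_filter_adjoin: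
  assumes "is_filter c F"
  shows "u \<in> filter_adjoin c F u"
proof -
  obtain f where "f \<in> F"
    using assms unfolding is_filter_def by blast
  then show ?thesis
    unfolding filter_adjoin_def using preleq_comp_self by blast
qed

lemma max_separating_not_mem:
  assumes "max_separating c a b F" and "u \<notin> F"
  shows "\<exists>f\<in>F. c (c f u) a = c (c f u) b"
proof -
  have sep: "separating c a b F"
    using assms(1) unfolding max_separating_def by blast
  then have filter: "is_filter c F"
    unfolding separating_def by blast
  have "\<not> separating c a b (filter_adjoin c F u)"
    using assms mem_filter_adjoin[OF filter] subset_filter_adjoin
    unfolding max_separating_def by blast
  then obtain e where "e \<in> filter_adjoin c F u" "c e a = c e b"
    using sep filter_adjoin_is_filter[OF filter] subset_filter_adjoin
    unfolding separating_def by blast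
  then show ?thesis
    unfolding filter_adjoin_def using equalizer_preleq by blast
qed

end

locale cancellative_minus_band = right_normal_band c
  for c :: "'a \<Rightarrow> 'a \<Rightarrow> 'a" +
  fixes m :: "'a \<Rightarrow> 'a \<Rightarrow> 'a"
  assumes comp_minus: "c (m x y) w = m (c x w) y"
    and cancel: "m s x = m t x \<Longrightarrow> c x s = c x t \<Longrightarrow> s = t"
begin

lemma equalizer_split:
  assumes y: "c (c f y) a = c (c f y) b"
    and xy: "c (c f (m x y)) a = c (c f (m x y)) b"
  shows "c (c f x) a = c (c f x) b"
proof (rule cancel)
  have "m (c (c f x) w) y = c (c f (m x y)) w" for w
  proof -
    have "m (c (c f x) w) y = m (c x (c f w)) y"
      by (simp only: assoc left_commute[of f x])
    also have "\<dots> = c (c f (m x y)) w"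
      by (simp only: comp_minus[symmetric] right_normal[of f] assoc left_commute[of "m x y" f])
    finally show ?thesis .
  qed
  then show "m (c (c f x) a) y = m (c (c f x) b) y"
    using xy by simp
  have "c y (c (c f x) w) = c x (c (c f y) w)" for w
    by (simp only: assoc left_commute[of y f] left_commute[of y x] left_commute[of f x])
  then show "c y (c (c f x) a) = c y (c (c f x) b)"
    using y by simp
qed

lemma max_separating_prime:
  assumes sep: "max_separating c a b F" and x: "x \<in> F"
  shows "y \<in> F \<or> m x y \<in> F"
proof (rule ccontr)
  assume "\<not> (y \<in> F \<or> m x y \<in> F)"
  then obtain f\<^sub>1 f\<^sub>2 where f\<^sub>1: "f\<^sub>1 \<in> F" "c (c f\<^sub>1 y) a = c (c f\<^sub>1 y) b"
    and f\<^sub>2: "f\<^sub>2 \<in> F" "c (c f\<^sub>2 (m x y)) a = c (c f\<^sub>2 (m x y)) b"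
    using max_separating_not_mem[OF sep] by meson
  have F: "is_filter c F" "\<And>e. e \<in> F \<Longrightarrow> c e a \<noteq> c e b"
    using sep unfolding max_separating_def separating_def by blast+
  have "c (c (c f\<^sub>1 f\<^sub>2) y) a = c (c (c f\<^sub>1 f\<^sub>2) y) b"
    using equalizer_left_mult[OF f\<^sub>1(2), of f\<^sub>2] by (simp add: assoc left_commute)
  moreover have "c (c (c f\<^sub>1 f\<^sub>2) (m x y)) a = c (c (c f\<^sub>1 f\<^sub>2) (m x y)) b"
    using equalizer_left_mult[OF f\<^sub>2(2), of f\<^sub>1] by (simp add: assoc)
  ultimately have "c (c (c f\<^sub>1 f\<^sub>2) x) a = c (c (c f\<^sub>1 f\<^sub>2) x) b"
    by (rule equalizer_split)
  moreover have "c (c f\<^sub>1 f\<^sub>2) x \<in> F"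
    using F(1) f\<^sub>1(1) f\<^sub>2(1) x unfolding is_filter_def by blast
  ultimately show False
    using F(2) by blast
qed

end

lemma minus_algebra_cancellative_minus_band:
  "minus_algebra c m z \<Longrightarrow> cancellative_minus_band c m"
  unfolding minus_algebra_def cancellative_minus_band_def
    cancellative_minus_band_axioms_def right_normal_band_def
  by blast

theorem lemma3p11:
  fixes c m :: "'a \<Rightarrow> 'a \<Rightarrow> 'a" and z a b :: 'a and F :: "'a set"
  assumes "minus_algebra c m z"
    and "\<not> leqc c a b"
    and "max_separating c a b F"
  shows "\<forall>x\<in>F. \<forall>y. y \<in> F \<or> m x y \<in> F"
  using cancellative_minus_band.max_separating_prime
    [OF minus_algebra_cancellative_minus_band[OF assms(1)] assms(3)] by blast

end
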